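(* Let $n\ge1$, put $L=2^n$ and $M=2^{n-1}$, and let $g={}_5h_n$. Define the words \begin{align*} {}_6h_{n+1}&=\delta_f(g)\,u\,\overline{\delta_m(g)}\,r\,g\,d\,\overline{\delta_y(g)},\\ {}_7h_{n+1}&=\delta_f(g)\,u\,\overline{\delta_m(g)}\,r\,g\,d\,\delta_a(g),\\ {}_8h_{n+1}&=\overline{\delta_g(g)}\,u\,\overline{\delta_m(g)}\,r\,g\,d\,\delta_a(g),\\ {}_9h_{n+1}&=\overline{\delta_o(g)}\,u\,\delta_g(g)\,r\,\overline{\delta_a(g)}\,d\,\delta_x(g),\\ {}_{10}h_{n+1}&=\delta_m(g)\,u\,\delta_g(g)\,r\,\overline{\delta_a(g)}\,d\,\overline{g},\\ {}_{11}h_{n+1}&=\delta_m(g)\,u\,\delta_g(g)\,r\,\overline{\delta_a(g)}\,d\,\delta_x(g). \end{align*} Then each of these words traces a Hamiltonian path of the grid $\{0,\dots,2L-1\}^2$, with the following endpoints: \begin{enumerate} \item ${}_6h_{n+1}$ goes from $(L-1,M)$ to $(L,M)$; the endpoints are adjacent. \item ${}_7h_{n+1}$ goes from $(L-1,M)$ to $(2L-1,M-1)$. \item ${}_8h_{n+1}$ goes from $(0,M-1)$ to $(2L-1,M-1)$. \item ${}_9h_{n+1}$ goes from $(L-1,M-1)$ to $(L,M-1)$; the endpoints are adjacent. \item ${}_{10}h_{n+1}$ goes from $(0,M)$ to $(2L-1,M)$. \item ${}_{11}h_{n+1}$ goes from $(0,M)$ to $(L,M-1)$. \end{enumerate}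
   Context: Let $\Sigma=\{u,d,r,l\}$, where $u$ = up, $d$ = down, $r$ = right and $l$ = left. Set $v(u)=(0,1)$, $v(d)=(0,-1)$, $v(r)=(1,0)$ and $v(l)=(-1,0)$. For a finite word $w=w_1\cdots w_k$ over $\Sigma$ and a point $p\in\mathbb{Z}^2$, the lattice path encoded by $w$ from $p$ is the sequence $p_0=p$, $p_i=p_{i-1}+v(w_i)$ for $i=1,\dots,k$. For $m\ge 1$, say that $w$ traces a Hamiltonian path of the grid $\{0,\dots,m-1\}^2$ from $a$ to $b$ if the path encoded by $w$ from $a$ satisfies three conditions: the points $p_0,\dots,p_k$ are pairwise distinct; $\{p_0,\dots,p_k\}=\{0,\dots,m-1\}^2$, so that $k=m^2-1$; and $p_k=b$. Grid points represent the $m^2$ equal subsquares of the unit square, and consecutive points are edge-adjacent squares. Juxtaposition denotes concatenation of words. The reversion operation is $\overline{w_1w_2\cdots w_k}=w_k\cdots w_2w_1$: the order of the letters is reversed and no letter is substituted. The following letter-to-letter morphisms of $\Sigma^*$ are applied letterwise: \begin{itemize} \item $\delta_o$: $u\mapsto r$, $r\mapsto u$, $d\mapsto l$, $l\mapsto d$; \item $\delta_a$: $u\mapsto l$, $r\mapsto d$, $d\mapsto r$, $l\mapsto u$; \item $\delta_g$: $u\mapsto l$, $r\mapsto u$, $d\mapsto r$, $l\mapsto d$; \item $\delta_x$: $u\mapsto r$, $r\mapsto d$, $d\mapsto l$, $l\mapsto u$; \item $\delta_f$: $u\mapsto d$, $r\mapsto l$, $d\mapsto u$, $l\mapsto r$;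 \item $\delta_m$: $u\mapsto d$, $r\mapsto r$, $d\mapsto u$, $l\mapsto l$; \item $\delta_y$: $u\mapsto u$, $r\mapsto l$, $d\mapsto d$, $l\mapsto r$. \end{itemize} The Hilbert words are defined recursively by ${}_0h_0=\varepsilon$ (the empty word) and \[ {}_0h_{n+1}=\delta_o({}_0h_n)\,u\,{}_0h_n\,r\,{}_0h_n\,d\,\delta_a({}_0h_n). \] For $n\ge1$, put $h={}_0h_{n-1}$ and define \[ {}_5h_n=\delta_m(h)\,u\,\delta_g(h)\,r\,\delta_x(h)\,d\,\delta_x(h). \] *)

theory Defs
  imports Main
begin

datatype letter = U | D | R | L

fun vec :: "letter \<Rightarrow> int \<times> int" where
  "vec U = (0, 1)" | "vec D = (0, -1)" | "vec R = (1, 0)" | "vec L = (-1, 0)"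

fun path :: "int \<times> int \<Rightarrow> letter list \<Rightarrow> (int \<times> int) list" where
  "path p [] = [p]"
| "path p (c # w) = p # path (fst p + fst (vec c), snd p + snd (vec c)) w"

definition grid :: "nat \<Rightarrow> (int \<times> int) set" where
  "grid m = {0..int m - 1} \<times> {0..int m - 1}"

definition traces_ham :: "letter list \<Rightarrow> nat \<Rightarrow> int \<times> int \<Rightarrow> int \<times> int \<Rightarrow> bool" where
  "traces_ham w m a b \<longleftrightarrow>
     distinct (path a w) \<and> set (path a w) = grid m \<and> last (path a w) = b"

fun d_o :: "letter \<Rightarrow> letter" where
  "d_o U = R" | "d_o R = U" | "d_o D = L" | "d_o L = D"
fun d_a :: "letter \<Rightarrow> letter" where
  "d_a U = L" | "d_a R = D" | "d_a D = R" | "d_a L = U"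
fun d_g :: "letter \<Rightarrow> letter" where
  "d_g U = L" | "d_g R = U" | "d_g D = R" | "d_g L = D"
fun d_x :: "letter \<Rightarrow> letter" where
  "d_x U = R" | "d_x R = D" | "d_x D = L" | "d_x L = U"
fun d_f :: "letter \<Rightarrow> letter" where
  "d_f U = D" | "d_f R = L" | "d_f D = U" | "d_f L = R"
fun d_m :: "letter \<Rightarrow> letter" where
  "d_m U = D" | "d_m R = R" | "d_m D = U" | "d_m L = L"
fun d_y :: "letter \<Rightarrow> letter" where
  "d_y U = U" | "d_y R = L" | "d_y D = D" | "d_y L = R"

fun h0 :: "nat \<Rightarrow> letter list" where
  "h0 0 = []"
| "h0 (Suc n) = map d_o (h0 n) @ [U] @ h0 n @ [R] @ h0 n @ [D] @ map d_a (h0 n)"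

definition h5 :: "nat \<Rightarrow> letter list" where
  "h5 n = (let h = h0 (n - 1) in
     map d_m h @ [U] @ map d_g h @ [R] @ map d_x h @ [D] @ map d_x h)"

definition h6 :: "nat \<Rightarrow> letter list" where
  "h6 n = (let g = h5 n in
     map d_f g @ [U] @ rev (map d_m g) @ [R] @ g @ [D] @ rev (map d_y g))"
definition h7 :: "nat \<Rightarrow> letter list" where
  "h7 n = (let g = h5 n in
     map d_f g @ [U] @ rev (map d_m g) @ [R] @ g @ [D] @ map d_a g)"
definition h8 :: "nat \<Rightarrow> letter list" where
  "h8 n = (let g = h5 n in
     rev (map d_g g) @ [U] @ rev (map d_m g) @ [R] @ g @ [D] @ map d_a g)"
definition h9 :: "nat \<Rightarrow> letter list" where
  "h9 n = (let g = h5 n in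
     rev (map d_o g) @ [U] @ map d_g g @ [R] @ rev (map d_a g) @ [D] @ map d_x g)"
definition h10 :: "nat \<Rightarrow> letter list" where
  "h10 n = (let g = h5 n in
     map d_m g @ [U] @ map d_g g @ [R] @ rev (map d_a g) @ [D] @ rev g)"
definition h11 :: "nat \<Rightarrow> letter list" where
  "h11 n = (let g = h5 n in
     map d_m g @ [U] @ map d_g g @ [R] @ rev (map d_a g) @ [D] @ map d_x g)"

definition adjacent :: "int \<times> int \<Rightarrow> int \<times> int \<Rightarrow> bool" where
  "adjacent p q \<longleftrightarrow> \<bar>fst p - fst q\<bar> + \<bar>snd p - snd q\<bar> = 1"

end

theory Submission
  imports Defs
begin

text \<open>Each letter morphism \<open>\<delta>\<close> moves along an isometry of the square, so mapping \<open>\<delta>\<close> over a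
  Hamiltonian path gives the image path, and reversing a word after applying \<open>\<delta>\<^sub>f\<close> walks the
  path backwards. A word \<open>w\<^sub>1 u w\<^sub>2 r w\<^sub>3 d w\<^sub>4\<close> whose four pieces are Hamiltonian paths of
  the lower-left, upper-left, upper-right and lower-right quadrants is Hamiltonian on the doubled
  grid as soon as each connecting letter joins the end of one piece to the start of the next.
  This gives the Hilbert words \<open>\<^sub>0h\<^sub>n\<close> and \<open>\<^sub>5h\<^sub>n\<close> by induction, and each of the six words
  is four symmetric or reversed copies of \<open>\<^sub>5h\<^sub>n\<close> whose endpoints match up.\<close>

definition step :: "int \<times> int \<Rightarrow> letter \<Rightarrow> int \<times> int" where
  "step p c = (fst p + fst (vec c), snd p + snd (vec c))"

lemma path_Cons_step: "path p (c # w) = p # path (step p c) w"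
  by (simp add: step_def)

declare path.simps(2) [simp del]

lemma path_not_Nil [simp]: "path p w \<noteq> []"
  by (cases w) (auto simp: path_Cons_step)

lemma hd_path [simp]: "hd (path p w) = p"
  by (cases w) (auto simp: path_Cons_step)

lemma path_append_Cons:
  "path p (u @ c # w) = path p u @ path (step (last (path p u)) c) w"
  by (induction u arbitrary: p) (auto simp: path_Cons_step)

lemma path_map:
  assumes "\<And>p c. T (step p c) = step (T p) (f c)"
  shows "path (T p) (map f w) = map T (path p w)"
  by (induction w arbitrary: p) (auto simp: path_Cons_step simp flip: assms)

lemma vec_letter_maps [simp]:
  "vec (d_o c) = (snd (vec c), fst (vec c))"
  "vec (d_a c) = (- snd (vec c), - fst (vec c))"
  "vec (d_g c) = (- snd (vec c), fst (vec c))"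
  "vec (d_x c) = (snd (vec c), - fst (vec c))"
  "vec (d_f c) = (- fst (vec c), - snd (vec c))"
  "vec (d_m c) = (fst (vec c), - snd (vec c))"
  "vec (d_y c) = (- fst (vec c), snd (vec c))"
  by (cases c; simp)+

lemma step_d_f_cancel [simp]: "step (step p c) (d_f c) = p"
  by (simp add: step_def)

lemma path_rev:
  "path (last (path p w)) (rev (map d_f w)) = rev (path p w)"
proof (induction w arbitrary: p)
  case (Cons c w)
  have "path (last (path p (c # w))) (rev (map d_f (c # w)))
      = path (last (path (step p c) w)) (rev (map d_f w) @ d_f c # [])"
    by (simp add: path_Cons_step)
  also have "\<dots> = rev (path (step p c) w) @ [p]"
    by (simp add: path_append_Cons Cons.IH last_rev path_Cons_step)
  finally show ?case by (simp add: path_Cons_step)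
qed simp

definition traces_on :: "letter list \<Rightarrow> (int \<times> int) set \<Rightarrow> int \<times> int \<Rightarrow> int \<times> int \<Rightarrow> bool" where
  "traces_on w S a b \<longleftrightarrow> distinct (path a w) \<and> set (path a w) = S \<and> last (path a w) = b"

lemma traces_ham_iff_traces_on: "traces_ham w m a b \<longleftrightarrow> traces_on w (grid m) a b"
  by (simp add: traces_ham_def traces_on_def)

lemma traces_on_map:
  assumes "traces_on w S a b"
    and "\<And>p c. T (step p c) = step (T p) (f c)"
    and "inj_on T S"
  shows "traces_on (map f w) (T ` S) (T a) (T b)"
  using assms by (auto simp: traces_on_def path_map distinct_map last_map)

lemma traces_on_rev:
  assumes "traces_on w S a b"
  shows "traces_on (rev (map d_f w)) S b a"
  using assms path_rev[of a w] by (auto simp: traces_on_def last_rev)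

lemma traces_on_append:
  assumes "traces_on u A a b" and "traces_on w B b' e" and "step b c = b'" and "A \<inter> B = {}"
  shows "traces_on (u @ c # w) (A \<union> B) a e"
  using assms by (auto simp: traces_on_def path_append_Cons)

lemma traces_ham_map:
  assumes "traces_ham w m a b"
    and "\<And>p c. T (step p c) = step (T p) (f c)"
    and "bij_betw T (grid m) (grid m)"
    and "T a = a'" and "T b = b'"
  shows "traces_ham (map f w) m a' b'"
  using traces_on_map[of w "grid m" a b T f] assms
  by (simp add: traces_ham_iff_traces_on bij_betw_def)

lemma traces_ham_rev:
  assumes "traces_ham w m a b"
  shows "traces_ham (rev (map d_f w)) m b a"
  using assms traces_on_rev by (simp add: traces_ham_iff_traces_on)

lemma traces_ham_d_o:
  assumes "traces_ham w m (x1, y1) (x2, y2)"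
  shows "traces_ham (map d_o w) m (y1, x1) (y2, x2)"
  by (rule traces_ham_map[OF assms, where T = "\<lambda>(x, y). (y, x)"])
    (auto simp: step_def grid_def split: prod.split
      intro!: bij_betw_byWitness[where f' = "\<lambda>(x, y). (y, x)"])

lemma traces_ham_d_a:
  assumes "traces_ham w m (x1, y1) (x2, y2)"
  shows "traces_ham (map d_a w) m (int m - 1 - y1, int m - 1 - x1) (int m - 1 - y2, int m - 1 - x2)"
  by (rule traces_ham_map[OF assms, where T = "\<lambda>(x, y). (int m - 1 - y, int m - 1 - x)"])
    (auto simp: step_def grid_def split: prod.split
      intro!: bij_betw_byWitness[where f' = "\<lambda>(x, y). (int m - 1 - y, int m - 1 - x)"])

lemma traces_ham_d_g:
  assumes "traces_ham w m (x1, y1) (x2, y2)"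
  shows "traces_ham (map d_g w) m (int m - 1 - y1, x1) (int m - 1 - y2, x2)"
  by (rule traces_ham_map[OF assms, where T = "\<lambda>(x, y). (int m - 1 - y, x)"])
    (auto simp: step_def grid_def split: prod.split
      intro!: bij_betw_byWitness[where f' = "\<lambda>(x, y). (y, int m - 1 - x)"])

lemma traces_ham_d_x:
  assumes "traces_ham w m (x1, y1) (x2, y2)"
  shows "traces_ham (map d_x w) m (y1, int m - 1 - x1) (y2, int m - 1 - x2)"
  by (rule traces_ham_map[OF assms, where T = "\<lambda>(x, y). (y, int m - 1 - x)"])
    (auto simp: step_def grid_def split: prod.split
      intro!: bij_betw_byWitness[where f' = "\<lambda>(x, y). (int m - 1 - y, x)"])

lemma traces_ham_d_f:
  assumes "traces_ham w m (x1, y1) (x2, y2)"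
  shows "traces_ham (map d_f w) m (int m - 1 - x1, int m - 1 - y1) (int m - 1 - x2, int m - 1 - y2)"
  by (rule traces_ham_map[OF assms, where T = "\<lambda>(x, y). (int m - 1 - x, int m - 1 - y)"])
    (auto simp: step_def grid_def split: prod.split
      intro!: bij_betw_byWitness[where f' = "\<lambda>(x, y). (int m - 1 - x, int m - 1 - y)"])

lemma traces_ham_d_m:
  assumes "traces_ham w m (x1, y1) (x2, y2)"
  shows "traces_ham (map d_m w) m (x1, int m - 1 - y1) (x2, int m - 1 - y2)"
  by (rule traces_ham_map[OF assms, where T = "\<lambda>(x, y). (x, int m - 1 - y)"])
    (auto simp: step_def grid_def split: prod.split
      intro!: bij_betw_byWitness[where f' = "\<lambda>(x, y). (x, int m - 1 - y)"])

lemma traces_ham_d_y: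
  assumes "traces_ham w m (x1, y1) (x2, y2)"
  shows "traces_ham (map d_y w) m (int m - 1 - x1, y1) (int m - 1 - x2, y2)"
  by (rule traces_ham_map[OF assms, where T = "\<lambda>(x, y). (int m - 1 - x, y)"])
    (auto simp: step_def grid_def split: prod.split
      intro!: bij_betw_byWitness[where f' = "\<lambda>(x, y). (int m - 1 - x, y)"])

definition square :: "int \<times> int \<Rightarrow> nat \<Rightarrow> (int \<times> int) set" where
  "square p m = {fst p..fst p + int m - 1} \<times> {snd p..snd p + int m - 1}"

lemma traces_ham_shift:
  assumes "traces_ham w m (x1, y1) (x2, y2)"
  shows "traces_on w (square (s, t) m) (x1 + s, y1 + t) (x2 + s, y2 + t)"
proof -
  let ?T = "\<lambda>(x, y). (x + s, y + t)"
  have "?T ` grid m = square (s, t) m"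
  proof (intro equalityI subsetI)
    fix q assume "q \<in> square (s, t) m"
    then have "(fst q - s, snd q - t) \<in> grid m" and "q = ?T (fst q - s, snd q - t)"
      by (auto simp: grid_def square_def)
    then show "q \<in> ?T ` grid m" by blast
  qed (auto simp: grid_def square_def)
  moreover have "inj_on ?T (grid m)"
    by (auto simp: inj_on_def)
  ultimately show ?thesis
    using traces_on_map[of w "grid m" "(x1, y1)" "(x2, y2)" ?T id] assms
    by (simp add: traces_ham_iff_traces_on step_def split: prod.split)
qed

lemma traces_ham_quadrants:
  assumes "traces_ham w1 m a (x1, k)"
    and "traces_ham w2 m (x1, 0) (k, y2)"
    and "traces_ham w3 m (0, y2) (x3, 0)"
    and "traces_ham w4 m (x3, k) (x4, y4)"
    and m: "int m = k + 1"
  shows "traces_ham (w1 @ [U] @ w2 @ [R] @ w3 @ [D] @ w4) (2 * m) a (x4 + k + 1, y4)"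
proof -
  have q1: "traces_on w1 (square (0, 0) m) a (x1, k)"
    using assms(1) by (simp add: traces_ham_iff_traces_on grid_def square_def)
  have q2: "traces_on w2 (square (0, k + 1) m) (x1, k + 1) (k, y2 + k + 1)"
    using traces_ham_shift[OF assms(2), of 0 "k + 1"] by (simp add: add.assoc)
  have q3: "traces_on w3 (square (k + 1, k + 1) m) (k + 1, y2 + k + 1) (x3 + k + 1, k + 1)"
    using traces_ham_shift[OF assms(3), of "k + 1" "k + 1"] by (simp add: add.assoc)
  have q4: "traces_on w4 (square (k + 1, 0) m) (x3 + k + 1, k) (x4 + k + 1, y4)"
    using traces_ham_shift[OF assms(4), of "k + 1" 0] by (simp add: add.assoc)
  have "traces_on (w1 @ U # w2 @ R # w3 @ D # w4)
      (square (0, 0) m \<union> (square (0, k + 1) m \<union> (square (k + 1, k + 1) m \<union> square (k + 1, 0) m)))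
      a (x4 + k + 1, y4)"
    by (rule traces_on_append[OF q1 traces_on_append[OF q2 traces_on_append[OF q3 q4]]])
      (auto simp: step_def square_def m)
  moreover have "square (0, 0) m \<union> (square (0, k + 1) m \<union> (square (k + 1, k + 1) m \<union> square (k + 1, 0) m))
      = grid (2 * m)"
    by (auto simp: square_def grid_def m)
  ultimately show ?thesis
    by (simp add: traces_ham_iff_traces_on)
qed

lemma d_f_after_letter_maps [simp]:
  "d_f (d_y c) = d_m c" "d_f (d_m c) = d_y c" "d_f (d_x c) = d_g c"
  "d_f (d_a c) = d_o c" "d_f (d_o c) = d_a c" "d_f (d_f c) = c"
  by (cases c; simp)+

lemma h0_ham: "traces_ham (h0 n) (2 ^ n) (0, 0) (2 ^ n - 1, 0)"
proof (induction n)
  case 0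
  then show ?case by (auto simp: traces_ham_def grid_def)
next
  case (Suc n)
  have o: "traces_ham (map d_o (h0 n)) (2 ^ n) (0, 0) (0, 2 ^ n - 1)"
    using traces_ham_d_o[OF Suc.IH] by simp
  have a: "traces_ham (map d_a (h0 n)) (2 ^ n) (2 ^ n - 1, 2 ^ n - 1) (2 ^ n - 1, 0)"
    using traces_ham_d_a[OF Suc.IH] by simp
  show ?case
    using traces_ham_quadrants[OF o Suc.IH Suc.IH a] by simp
qed

lemma h5_ham: "traces_ham (h5 (Suc k)) (2 * 2 ^ k) (0, 2 ^ k - 1) (2 ^ k, 0)"
proof -
  have m: "traces_ham (map d_m (h0 k)) (2 ^ k) (0, 2 ^ k - 1) (2 ^ k - 1, 2 ^ k - 1)"
    using traces_ham_d_m[OF h0_ham] by simp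
  have g: "traces_ham (map d_g (h0 k)) (2 ^ k) (2 ^ k - 1, 0) (2 ^ k - 1, 2 ^ k - 1)"
    using traces_ham_d_g[OF h0_ham] by simp
  have x: "traces_ham (map d_x (h0 k)) (2 ^ k) (0, 2 ^ k - 1) (0, 0)"
    using traces_ham_d_x[OF h0_ham] by simp
  show ?thesis
    using traces_ham_quadrants[OF m g x x] by (simp add: h5_def Let_def)
qed

context
  fixes g :: "letter list" and M :: nat
  assumes g: "traces_ham g (2 * M) (0, int M - 1) (int M, 0)"
begin

lemma g_map_d_o: "traces_ham (map d_o g) (2 * M) (int M - 1, 0) (0, int M)"
  using traces_ham_d_o[OF g] by simp

lemma g_map_d_a: "traces_ham (map d_a g) (2 * M) (int M, 2 * int M - 1) (2 * int M - 1, int M - 1)"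
  using traces_ham_d_a[OF g] by simp

lemma g_map_d_g: "traces_ham (map d_g g) (2 * M) (int M, 0) (2 * int M - 1, int M)"
  using traces_ham_d_g[OF g] by simp

lemma g_map_d_x: "traces_ham (map d_x g) (2 * M) (int M - 1, 2 * int M - 1) (0, int M - 1)"
  using traces_ham_d_x[OF g] by simp

lemma g_map_d_f: "traces_ham (map d_f g) (2 * M) (2 * int M - 1, int M) (int M - 1, 2 * int M - 1)"
  using traces_ham_d_f[OF g] by simp

lemma g_map_d_m: "traces_ham (map d_m g) (2 * M) (0, int M) (int M, 2 * int M - 1)"
  using traces_ham_d_m[OF g] by simp

lemma g_map_d_y: "traces_ham (map d_y g) (2 * M) (2 * int M - 1, int M - 1) (int M - 1, 0)"
  using traces_ham_d_y[OF g] by simp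

lemma g_rev: "traces_ham (rev g) (2 * M) (int M - 1, 2 * int M - 1) (2 * int M - 1, int M)"
  using traces_ham_rev[OF g_map_d_f] by (simp add: comp_def)

lemma g_rev_map_d_o: "traces_ham (rev (map d_o g)) (2 * M) (2 * int M - 1, int M - 1) (int M, 2 * int M - 1)"
  using traces_ham_rev[OF g_map_d_a] by (simp add: comp_def)

lemma g_rev_map_d_a: "traces_ham (rev (map d_a g)) (2 * M) (0, int M) (int M - 1, 0)"
  using traces_ham_rev[OF g_map_d_o] by (simp add: comp_def)

lemma g_rev_map_d_g: "traces_ham (rev (map d_g g)) (2 * M) (0, int M - 1) (int M - 1, 2 * int M - 1)"
  using traces_ham_rev[OF g_map_d_x] by (simp add: comp_def)

lemma g_rev_map_d_m: "traces_ham (rev (map d_m g)) (2 * M) (int M - 1, 0) (2 * int M - 1, int M - 1)"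
  using traces_ham_rev[OF g_map_d_y] by (simp add: comp_def)

lemma g_rev_map_d_y: "traces_ham (rev (map d_y g)) (2 * M) (int M, 2 * int M - 1) (0, int M)"
  using traces_ham_rev[OF g_map_d_m] by (simp add: comp_def)

end

theorem mainTheorem2:
  fixes n :: nat
  assumes "n \<ge> 1"
  defines "Lg \<equiv> (2::int) ^ n" and "Mg \<equiv> (2::int) ^ (n - 1)"
  shows "traces_ham (h6 n) (2 * 2 ^ n) (Lg - 1, Mg) (Lg, Mg) \<and> adjacent (Lg - 1, Mg) (Lg, Mg)
    \<and> traces_ham (h7 n) (2 * 2 ^ n) (Lg - 1, Mg) (2 * Lg - 1, Mg - 1)
    \<and> traces_ham (h8 n) (2 * 2 ^ n) (0, Mg - 1) (2 * Lg - 1, Mg - 1)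
    \<and> traces_ham (h9 n) (2 * 2 ^ n) (Lg - 1, Mg - 1) (Lg, Mg - 1) \<and> adjacent (Lg - 1, Mg - 1) (Lg, Mg - 1)
    \<and> traces_ham (h10 n) (2 * 2 ^ n) (0, Mg) (2 * Lg - 1, Mg)
    \<and> traces_ham (h11 n) (2 * 2 ^ n) (0, Mg) (Lg, Mg - 1)"
proof -
  obtain k where n: "n = Suc k"
    using assms(1) by (cases n) auto
  define M :: nat where "M = 2 ^ k"
  have sizes: "2 ^ n = 2 * M" "Lg = 2 * int M" "Mg = int M"
    by (simp_all add: Lg_def Mg_def M_def n)
  have g: "traces_ham (h5 n) (2 * M) (0, int M - 1) (int M, 0)"
    using h5_ham[of k] by (simp add: n M_def)
  note quadrants = traces_ham_quadrants[where k = "2 * int M - 1"]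
  have "traces_ham (h6 n) (2 * (2 * M)) (2 * int M - 1, int M) (2 * int M, int M)"
    using quadrants[OF g_map_d_f[OF g] g_rev_map_d_m[OF g] g g_rev_map_d_y[OF g]]
    by (simp add: h6_def Let_def)
  moreover have "traces_ham (h7 n) (2 * (2 * M)) (2 * int M - 1, int M) (4 * int M - 1, int M - 1)"
    using quadrants[OF g_map_d_f[OF g] g_rev_map_d_m[OF g] g g_map_d_a[OF g]]
    by (simp add: h7_def Let_def)
  moreover have "traces_ham (h8 n) (2 * (2 * M)) (0, int M - 1) (4 * int M - 1, int M - 1)"
    using quadrants[OF g_rev_map_d_g[OF g] g_rev_map_d_m[OF g] g g_map_d_a[OF g]]
    by (simp add: h8_def Let_def)
  moreover have "traces_ham (h9 n) (2 * (2 * M)) (2 * int M - 1, int M - 1) (2 * int M, int M - 1)"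
    using quadrants[OF g_rev_map_d_o[OF g] g_map_d_g[OF g] g_rev_map_d_a[OF g] g_map_d_x[OF g]]
    by (simp add: h9_def Let_def)
  moreover have "traces_ham (h10 n) (2 * (2 * M)) (0, int M) (4 * int M - 1, int M)"
    using quadrants[OF g_map_d_m[OF g] g_map_d_g[OF g] g_rev_map_d_a[OF g] g_rev[OF g]]
    by (simp add: h10_def Let_def)
  moreover have "traces_ham (h11 n) (2 * (2 * M)) (0, int M) (2 * int M, int M - 1)"
    using quadrants[OF g_map_d_m[OF g] g_map_d_g[OF g] g_rev_map_d_a[OF g] g_map_d_x[OF g]]
    by (simp add: h11_def Let_def)
  ultimately show ?thesis
    unfolding sizes by (simp add: adjacent_def)
qed

end
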